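(* Let $(X(n),V(n))_{n\ge0}$ be a solution of the discrete Motsch–Tadmor model (as in the context), and assume there is an integer $n^\infty>0$ with $\|\Delta^x(n)\|_F\le M$ for all $n<n^\infty$ and $\|\Delta^x(n^\infty)\|_F>M$. Let $s_0<s_1<\dots<s_K$ be the distinct elements of the set $\{\|\Delta^x(n)\|_F:\ 0\le n\le n^\infty,\ \|\Delta^x(n)\|_F\ge\|\Delta^x(0)\|_F\}$, listed in increasing order. Then $s_0=\|\Delta^x(0)\|_F$, $s_K=\|\Delta^x(n^\infty)\|_F$, and \[ \sum_{q=0}^{K-1}(s_{q+1}-s_q)\,\psi(s_q)\le\sum_{n=0}^{n^\infty-1}\big(\|\Delta^x(n+1)\|_F-\|\Delta^x(n)\|_F\big)\,\psi(\|\Delta^x(n)\|_F). \]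
   Context: Discrete MT model: fix $N\ge1$, $d\ge1$, $\kappa>0$, $h>0$, and $a:[0,\infty)\to\mathbb{R}$ with constants $0<c_1\le c_2$, $c_1\le a\le c_2$, $|a(r_1)-a(r_2)|\le L_a|r_1-r_2|$ ($L_a>0$); $0<h<\min\{1,1/\kappa\}$. A solution satisfies $x_i(n+1)=x_i(n)+hv_i(n)$, $v_i(n+1)=v_i(n)+h\kappa\sum_j\phi_{ij}(n)(v_j(n)-v_i(n))$ with $\phi_{ij}(n)=\frac{a(\|x_i(n)-x_j(n)\|)}{\sum_ka(\|x_i(n)-x_k(n)\|)}$, $x_i,v_i\in\mathbb{R}^d$. Notation: $\|\Delta^x(n)\|_F=(\sum_{i,j}\|x_i(n)-x_j(n)\|^2)^{1/2}$. Constants: $\|\phi\|_{\mathrm{Lip}}=\frac{L_a}{Nc_1}(1+\frac{c_2}{c_1})$, $M=\frac{1}{4N\|\phi\|_{\mathrm{Lip}}}$, $\psi(s)=1-\|\phi\|_{\mathrm{Lip}}Ns$. *)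

theory Defs
  imports "HOL-Analysis.Analysis"
begin

text \<open>Discrete Motsch--Tadmor model. Agents are indexed by i < N, time steps by n :: nat;
  positions and velocities are x n i, v n i :: real^'d (dimension d = CARD('d) \<ge> 1).\<close>

definition MT_phi :: "nat \<Rightarrow> (real \<Rightarrow> real) \<Rightarrow> (nat \<Rightarrow> 'v::real_normed_vector) \<Rightarrow> nat \<Rightarrow> nat \<Rightarrow> real" where
  "MT_phi N a X i j = a (norm (X i - X j)) / (\<Sum>k<N. a (norm (X i - X k)))"

definition MT_solution :: "nat \<Rightarrow> real \<Rightarrow> real \<Rightarrow> (real \<Rightarrow> real)
    \<Rightarrow> (nat \<Rightarrow> nat \<Rightarrow> 'v::real_normed_vector) \<Rightarrow> (nat \<Rightarrow> nat \<Rightarrow> 'v) \<Rightarrow> bool" where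
  "MT_solution N \<kappa> h a x v \<longleftrightarrow>
     (\<forall>n i. i < N \<longrightarrow>
        x (Suc n) i = x n i + h *\<^sub>R v n i \<and>
        v (Suc n) i = v n i + (h * \<kappa>) *\<^sub>R (\<Sum>j<N. MT_phi N a (x n) i j *\<^sub>R (v n j - v n i)))"

definition DeltaF :: "nat \<Rightarrow> (nat \<Rightarrow> nat \<Rightarrow> 'v::real_normed_vector) \<Rightarrow> nat \<Rightarrow> real" where
  "DeltaF N x n = sqrt (\<Sum>i<N. \<Sum>j<N. (norm (x n i - x n j))\<^sup>2)"

definition phi_Lip :: "nat \<Rightarrow> real \<Rightarrow> real \<Rightarrow> real \<Rightarrow> real" where
  "phi_Lip N c1 c2 La = La / (real N * c1) * (1 + c2 / c1)"

definition M_const :: "nat \<Rightarrow> real \<Rightarrow> real \<Rightarrow> real \<Rightarrow> real" where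
  "M_const N c1 c2 La = 1 / (4 * real N * phi_Lip N c1 c2 La)"

definition psi :: "nat \<Rightarrow> real \<Rightarrow> real \<Rightarrow> real \<Rightarrow> real \<Rightarrow> real" where
  "psi N c1 c2 La s = 1 - phi_Lip N c1 c2 La * real N * s"

end

theory Submission
  imports Defs
begin

text \<open>Let \<open>F\<close> be the concave potential with \<open>F' = \<psi>\<close> below \<open>s\<^sub>0\<close> and
  \<open>F' = \<psi>(s\<^sub>q)\<close> on \<open>[s\<^sub>q, s\<^sub>q\<^sub>+\<^sub>1]\<close>. Since \<open>\<psi>\<close> is decreasing, \<open>F(t) - F(u) \<le> (t - u) \<psi>(u)\<close>
  whenever \<open>u\<close> lies below \<open>s\<^sub>0\<close> or on the grid, which is the case for every \<open>u = \<Delta>(n)\<close>.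
  Summing over \<open>n\<close> telescopes to \<open>F(\<Delta>(n\<^sup>\<infinity>)) - F(\<Delta>(0)) = F(s\<^sub>K) - F(s\<^sub>0)\<close>, which is
  exactly the left-hand sum.\<close>

lemma supergradient_antimono:
  fixes G \<psi> :: "real \<Rightarrow> real"
  assumes "\<And>t u. G t - G u \<le> (t - u) * \<psi> u"
  shows "antimono \<psi>"
proof
  fix t u :: real
  assume "t \<le> u"
  have "0 \<le> (u - t) * (\<psi> t - \<psi> u)"
    using assms[of t u] assms[of u t] by (simp add: algebra_simps)
  with \<open>t \<le> u\<close> show "\<psi> u \<le> \<psi> t"
    by (cases "t = u") (auto simp: zero_le_mult_iff)
qed

lemma quadratic_supergradient:
  fixes c t u :: real
  assumes "c \<ge> 0"
  shows "(t - c * t\<^sup>2 / 2) - (u - c * u\<^sup>2 / 2) \<le> (t - u) * (1 - c * u)"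
proof -
  have "(t - u) * (1 - c * u) - ((t - c * t\<^sup>2 / 2) - (u - c * u\<^sup>2 / 2)) = c * (t - u)\<^sup>2 / 2"
    by (simp add: algebra_simps power2_eq_square)
  moreover have "0 \<le> c * (t - u)\<^sup>2 / 2" using assms by simp
  ultimately show ?thesis by linarith
qed

definition length_below :: "real \<Rightarrow> real \<Rightarrow> real \<Rightarrow> real" where
  "length_below a b y = max 0 (min y b - a)"

lemma sum_length_below:
  fixes s :: "nat \<Rightarrow> real"
  assumes "mono_on {..K} s" and "s 0 \<le> y"
  shows "(\<Sum>q<K. length_below (s q) (s (Suc q)) y) = min y (s K) - s 0"
  using assms
proof (induction K)
  case 0
  then show ?case by (simp add: length_below_def)
next
  case (Suc K)
  then have "mono_on {..K} s" and "s K \<le> s (Suc K)"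
    by (auto intro: mono_on_subset mono_onD)
  with Suc show ?case by (auto simp: length_below_def)
qed

definition step_potential :: "(real \<Rightarrow> real) \<Rightarrow> (nat \<Rightarrow> real) \<Rightarrow> nat \<Rightarrow> real \<Rightarrow> real" where
  "step_potential \<psi> s K y = (\<Sum>q<K. \<psi> (s q) * length_below (s q) (s (Suc q)) y)"

lemma step_potential_start:
  assumes "mono_on {..K} s"
  shows "step_potential \<psi> s K (s 0) = 0"
  unfolding step_potential_def
proof (intro sum.neutral ballI)
  fix q assume "q \<in> {..<K}"
  with assms have "s 0 \<le> s q" by (auto intro: mono_onD)
  then show "\<psi> (s q) * length_below (s q) (s (Suc q)) (s 0) = 0"
    by (simp add: length_below_def)
qed

lemma step_potential_end:
  assumes "mono_on {..K} s"
  shows "step_potential \<psi> s K (s K) = (\<Sum>q<K. (s (Suc q) - s q) * \<psi> (s q))"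
  unfolding step_potential_def
proof (intro sum.cong refl)
  fix q assume "q \<in> {..<K}"
  with assms have "s q \<le> s (Suc q)" "s (Suc q) \<le> s K" by (auto intro: mono_onD)
  then show "\<psi> (s q) * length_below (s q) (s (Suc q)) (s K) = (s (Suc q) - s q) * \<psi> (s q)"
    by (simp add: length_below_def)
qed

text \<open>Termwise, the weight \<open>\<psi>(s\<^sub>q) - \<psi>(s\<^sub>p)\<close> and the increment of the \<open>q\<close>-th length
  have opposite signs: both change sign at \<open>q = p\<close>.\<close>

lemma step_potential_supergradient:
  assumes s: "mono_on {..K} s" and \<psi>: "antimono \<psi>"
    and "p \<le> K" and "s 0 \<le> t" and "t \<le> s K"
  shows "step_potential \<psi> s K t - step_potential \<psi> s K (s p) \<le> (t - s p) * \<psi> (s p)"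
proof -
  let ?d = "\<lambda>q. length_below (s q) (s (Suc q)) t - length_below (s q) (s (Suc q)) (s p)"
  have "s 0 \<le> s p" "s p \<le> s K"
    using s \<open>p \<le> K\<close> by (auto intro: mono_onD)
  then have "(\<Sum>q<K. ?d q) = t - s p"
    using sum_length_below[OF s, of t] sum_length_below[OF s, of "s p"] \<open>s 0 \<le> t\<close> \<open>t \<le> s K\<close>
    by (simp add: sum_subtractf)
  then have "(\<Sum>q<K. \<psi> (s p) * ?d q) = \<psi> (s p) * (t - s p)"
    by (simp flip: sum_distrib_left)
  then have "(\<Sum>q<K. (\<psi> (s q) - \<psi> (s p)) * ?d q)
      = (\<Sum>q<K. \<psi> (s q) * ?d q) - \<psi> (s p) * (t - s p)"
    by (simp only: left_diff_distrib sum_subtractf)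
  then have "step_potential \<psi> s K t - step_potential \<psi> s K (s p) - (t - s p) * \<psi> (s p)
      = (\<Sum>q<K. (\<psi> (s q) - \<psi> (s p)) * ?d q)"
    by (simp add: step_potential_def right_diff_distrib sum_subtractf mult.commute)
  also have "\<dots> \<le> 0"
  proof (intro sum_nonpos)
    fix q assume "q \<in> {..<K}"
    show "(\<psi> (s q) - \<psi> (s p)) * ?d q \<le> 0"
    proof (cases "q < p")
      case True
      with s \<open>p \<le> K\<close> have "s q \<le> s p" "s (Suc q) \<le> s p" by (auto intro: mono_onD)
      then have "0 \<le> \<psi> (s q) - \<psi> (s p)" "?d q \<le> 0"
        using \<psi> by (auto simp: antimonoD length_below_def)
      then show ?thesis by (rule mult_nonneg_nonpos)
    next
      case False
      with s \<open>q \<in> {..<K}\<close> have "s p \<le> s q" by (auto intro: mono_onD)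
      then have "\<psi> (s q) - \<psi> (s p) \<le> 0" "0 \<le> ?d q"
        using \<psi> by (auto simp: antimonoD length_below_def)
      then show ?thesis by (rule mult_nonpos_nonneg)
    qed
  qed
  finally show ?thesis by simp
qed

definition potential :: "(real \<Rightarrow> real) \<Rightarrow> (real \<Rightarrow> real) \<Rightarrow> (nat \<Rightarrow> real) \<Rightarrow> nat \<Rightarrow> real \<Rightarrow> real" where
  "potential G \<psi> s K y = (if y < s 0 then G y - G (s 0) else step_potential \<psi> s K y)"

lemma potential_supergradient:
  assumes G: "\<And>t u. G t - G u \<le> (t - u) * \<psi> u" and s: "mono_on {..K} s"
    and u: "u < s 0 \<or> u \<in> s ` {..K}" and "t \<le> s K"
  shows "potential G \<psi> s K t - potential G \<psi> s K u \<le> (t - u) * \<psi> u"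
proof -
  have \<psi>: "antimono \<psi>" using G by (rule supergradient_antimono)
  note step = step_potential_supergradient[OF s \<psi>]
  note start = step_potential_start[OF s, of \<psi>]
  show ?thesis
  proof (cases "u < s 0")
    case u_low: True
    show ?thesis
    proof (cases "t < s 0")
      case True
      with u_low G show ?thesis by (simp add: potential_def)
    next
      case False
      have "step_potential \<psi> s K t \<le> (t - s 0) * \<psi> (s 0)"
        using step[of 0 t] start False \<open>t \<le> s K\<close> by simp
      also have "\<dots> \<le> (t - s 0) * \<psi> u"
        using False u_low \<psi> by (simp add: antimonoD mult_left_mono)
      finally show ?thesis
        using G[of "s 0" u] u_low False by (simp add: potential_def algebra_simps)
    qed
  next
    case u_grid: False
    with u obtain p where p: "p \<le> K" "u = s p" by auto
    have "s 0 \<le> s K" using s by (auto intro: mono_onD)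
    show ?thesis
    proof (cases "t < s 0")
      case True
      have "- step_potential \<psi> s K u \<le> (s 0 - u) * \<psi> u"
        using step[of p "s 0"] start p \<open>s 0 \<le> s K\<close> by simp
      moreover have "(t - s 0) * \<psi> (s 0) \<le> (t - s 0) * \<psi> u"
        using True u_grid \<psi> by (simp add: antimonoD mult_left_mono_neg)
      ultimately show ?thesis
        using G[of t "s 0"] True u_grid by (simp add: potential_def algebra_simps)
    next
      case False
      with step[of p t] p u_grid \<open>t \<le> s K\<close> show ?thesis by (simp add: potential_def)
    qed
  qed
qed

lemma sorted_values_endpoints:
  fixes s D :: "nat \<Rightarrow> real"
  assumes s: "mono_on {..K} s"
    and range: "s ` {..K} = {D n | n. n \<le> m \<and> D n \<ge> D 0}"
    and max: "\<And>n. n \<le> m \<Longrightarrow> D n \<le> D m"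
  shows "s 0 = D 0" and "s K = D m"
proof -
  have "D 0 \<in> s ` {..K}" and "D m \<in> s ` {..K}"
    using range max[of 0] by auto
  then obtain p r where "p \<le> K" "s p = D 0" "r \<le> K" "s r = D m" by auto
  moreover have "s 0 \<in> s ` {..K}" and "s K \<in> s ` {..K}" by auto
  then have "D 0 \<le> s 0" and "\<exists>n \<le> m. s K = D n" using range by auto
  ultimately show "s 0 = D 0" and "s K = D m"
    using s max mono_onD[OF s, of 0 p] mono_onD[OF s, of r K] by force+
qed

lemma grid_sum_le_path_sum:
  fixes s D :: "nat \<Rightarrow> real"
  assumes G: "\<And>t u. G t - G u \<le> (t - u) * \<psi> u" and s: "mono_on {..K} s"
    and range: "s ` {..K} = {D n | n. n \<le> m \<and> D n \<ge> D 0}"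
    and max: "\<And>n. n \<le> m \<Longrightarrow> D n \<le> D m"
  shows "(\<Sum>q<K. (s (Suc q) - s q) * \<psi> (s q)) \<le> (\<Sum>n<m. (D (Suc n) - D n) * \<psi> (D n))"
proof -
  let ?F = "potential G \<psi> s K"
  have s0: "s 0 = D 0" and sK: "s K = D m"
    using sorted_values_endpoints[OF s range max] by auto
  have "s 0 \<le> s K" using s by (auto intro: mono_onD)
  then have "(\<Sum>q<K. (s (Suc q) - s q) * \<psi> (s q)) = ?F (D m) - ?F (D 0)"
    using step_potential_end[OF s] step_potential_start[OF s] s0 sK by (simp add: potential_def)
  also have "\<dots> = (\<Sum>n<m. ?F (D (Suc n)) - ?F (D n))"
    by (rule sum_lessThan_telescope[symmetric])
  also have "\<dots> \<le> (\<Sum>n<m. (D (Suc n) - D n) * \<psi> (D n))"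
  proof (rule sum_mono)
    fix n assume "n \<in> {..<m}"
    then have "D n < s 0 \<or> D n \<in> s ` {..K}" and "D (Suc n) \<le> s K"
      using range s0 sK max[of "Suc n"] by auto
    then show "?F (D (Suc n)) - ?F (D n) \<le> (D (Suc n) - D n) * \<psi> (D n)"
      by (rule potential_supergradient[OF G s])
  qed
  finally show ?thesis .
qed

theorem lemmaA1:
  fixes N :: nat and \<kappa> h c1 c2 La :: real and a :: "real \<Rightarrow> real"
    and x v :: "nat \<Rightarrow> nat \<Rightarrow> real ^ 'd"
    and ninf K :: nat and s :: "nat \<Rightarrow> real"
  assumes N: "N \<ge> 1" and kappa: "\<kappa> > 0"
    and h: "0 < h" "h < min 1 (1 / \<kappa>)"
    and c: "0 < c1" "c1 \<le> c2"
    and a_bounds: "\<And>r. r \<ge> 0 \<Longrightarrow> c1 \<le> a r \<and> a r \<le> c2"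
    and La: "La > 0"
    and a_lip: "\<And>r1 r2. r1 \<ge> 0 \<Longrightarrow> r2 \<ge> 0 \<Longrightarrow> \<bar>a r1 - a r2\<bar> \<le> La * \<bar>r1 - r2\<bar>"
    and sol: "MT_solution N \<kappa> h a x v"
    and ninf_pos: "ninf > 0"
    and below: "\<And>n. n < ninf \<Longrightarrow> DeltaF N x n \<le> M_const N c1 c2 La"
    and above: "DeltaF N x ninf > M_const N c1 c2 La"
    and s_mono: "strict_mono_on {..K} s"
    and s_range: "s ` {..K} = {DeltaF N x n | n. n \<le> ninf \<and> DeltaF N x n \<ge> DeltaF N x 0}"
  shows "s 0 = DeltaF N x 0 \<and> s K = DeltaF N x ninf \<and>
    (\<Sum>q<K. (s (Suc q) - s q) * psi N c1 c2 La (s q))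
      \<le> (\<Sum>n<ninf. (DeltaF N x (Suc n) - DeltaF N x n) * psi N c1 c2 La (DeltaF N x n))"
proof -
  define slope where "slope = phi_Lip N c1 c2 La * real N"
  have "slope \<ge> 0" unfolding slope_def phi_Lip_def using c La by simp
  then have G: "\<And>t u. (t - slope * t\<^sup>2 / 2) - (u - slope * u\<^sup>2 / 2) \<le> (t - u) * psi N c1 c2 La u"
    using quadratic_supergradient by (simp add: psi_def slope_def)
  have s: "mono_on {..K} s" using s_mono by (rule strict_mono_on_imp_mono_on)
  have max: "DeltaF N x n \<le> DeltaF N x ninf" if "n \<le> ninf" for n
    using below[of n] above that by (cases "n = ninf") auto
  show ?thesis
    using sorted_values_endpoints[OF s s_range max] grid_sum_le_path_sum[OF G s s_range max]
    by blast
qed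

end
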